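(* Let $G=(V,E)$ be a symmetric caterpillar with $n\ge 1$ spine vertices $s_1,\dots,s_n$, where $L_i$ denotes the number of leaves attached to $s_i$, and let $L=\max_{1\le i\le n}L_i$. Then $IDI(G)=L$ if $L\ge 2$, and $IDI(G)=2$ if $L=1$.
   Context: A caterpillar is a tree consisting of a path (the spine) $s_1,s_2,\dots,s_n$ together with leaves each attached to a spine vertex; $L_i\ge 0$ is the number of leaves attached to $s_i$, and $L_1,L_n\ge 1$ (a spine vertex is exactly a vertex of degree at least two, except that when $n=1$ the caterpillar is the star $K_{1,L_1}$). The caterpillar is symmetric if $L_j=L_{n+1-j}$ for all $1\le j\le\lfloor n/2\rfloor$. For a finite simple connected graph $G=(V,E)$ with diameter $d$, a rank assignment is a function $f:V\to\mathbb{R}$; under $f$, the string of a vertex $v$ is the $d$-vector whose $i$-th coordinate is the sum of $f(w)$ over all vertices $w$ with $d(v,w)=i$. The ID-index $IDI(G)$ is the minimum $k$ such that there exists $f:V\to\mathbb{R}$ with $|f(V)|=k$ under which all vertices have distinct strings. *)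

theory Defs
  imports Complex_Main
begin

definition walk_len :: "('a \<Rightarrow> 'a \<Rightarrow> bool) \<Rightarrow> 'a \<Rightarrow> 'a \<Rightarrow> nat \<Rightarrow> bool" where
  "walk_len E u v k \<longleftrightarrow> (\<exists>p :: nat \<Rightarrow> 'a. p 0 = u \<and> p k = v \<and> (\<forall>i<k. E (p i) (p (Suc i))))"

text \<open>Graph distance (for connected graphs): least length of a walk.\<close>
definition gdist :: "('a \<Rightarrow> 'a \<Rightarrow> bool) \<Rightarrow> 'a \<Rightarrow> 'a \<Rightarrow> nat" where
  "gdist E u v = (LEAST k. walk_len E u v k)"

definition diam :: "'a set \<Rightarrow> ('a \<Rightarrow> 'a \<Rightarrow> bool) \<Rightarrow> nat" where
  "diam V E = Max {gdist E u v | u v. u \<in> V \<and> v \<in> V}"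

definition vstring :: "'a set \<Rightarrow> ('a \<Rightarrow> 'a \<Rightarrow> bool) \<Rightarrow> ('a \<Rightarrow> real) \<Rightarrow> 'a \<Rightarrow> real list" where
  "vstring V E f v = map (\<lambda>i. \<Sum>w\<in>{w\<in>V. gdist E v w = i}. f w) [1..<Suc (diam V E)]"

definition IDI :: "'a set \<Rightarrow> ('a \<Rightarrow> 'a \<Rightarrow> bool) \<Rightarrow> nat" where
  "IDI V E = (LEAST k. \<exists>f :: 'a \<Rightarrow> real. card (f ` V) = k \<and> inj_on (vstring V E f) V)"

text \<open>Vertex (i,0) is the spine vertex s_i (1 \<le> i \<le> n); vertex (i,j) with
  1 \<le> j \<le> L i is the j-th leaf attached to s_i.\<close>
definition cat_V :: "nat \<Rightarrow> (nat \<Rightarrow> nat) \<Rightarrow> (nat \<times> nat) set" where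
  "cat_V n L = {(i, j). 1 \<le> i \<and> i \<le> n \<and> j \<le> L i}"

definition cat_E :: "nat \<Rightarrow> (nat \<Rightarrow> nat) \<Rightarrow> nat \<times> nat \<Rightarrow> nat \<times> nat \<Rightarrow> bool" where
  "cat_E n L x y \<longleftrightarrow> x \<in> cat_V n L \<and> y \<in> cat_V n L \<and>
     ((snd x = 0 \<and> snd y = 0 \<and> (fst x = Suc (fst y) \<or> fst y = Suc (fst x)))
      \<or> (snd x = 0 \<and> snd y \<noteq> 0 \<and> fst x = fst y)
      \<or> (snd x \<noteq> 0 \<and> snd y = 0 \<and> fst x = fst y))"

definition symmetric_caterpillar :: "nat \<Rightarrow> (nat \<Rightarrow> nat) \<Rightarrow> bool" where
  "symmetric_caterpillar n L \<longleftrightarrow> (\<forall>j. 1 \<le> j \<and> j \<le> n div 2 \<longrightarrow> L j = L (n + 1 - j))"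

end

theory Submission
  imports Defs "HOL-Combinatorics.Transposition"
begin

(* Lower bound: two leaves of the same spine vertex are swapped by an isometry of the graph,
   so a rank assignment with distinct strings must give them different ranks; hence IDI >= L.
   A caterpillar always has an isometry moving some vertex (the mirror i |-> n + 1 - i when
   n >= 2, which needs symmetry, otherwise a swap of two leaves or of the two vertices of K_2),
   so a constant assignment never works; hence IDI >= 2.

   Upper bound: give the j-th leaf of every spine vertex rank 2 - 1/j, give s_1 rank 3/2 and
   the other spine vertices rank 1. This uses max L 2 values, all in [1, 2). The string of v
   determines: its rank (the coordinates add up to f(V) - f(v)); whether v is a leaf (the first
   coordinate is < 2 iff v has at most one neighbour); and its eccentricity (ranks are positive).
   Rank and leaf-ness give the leaf index, the eccentricity gives the spine position up to the
   mirror, and v is separated from its mirror image at the larger of its distances to s_1 and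
   s_n: these are the only two vertices whose ranks the mirror changes, which is why s_1 gets
   a rank different from s_n. *)

section \<open>Distances and strings in graphs\<close>

definition gsphere :: "'a set \<Rightarrow> ('a \<Rightarrow> 'a \<Rightarrow> bool) \<Rightarrow> 'a \<Rightarrow> nat \<Rightarrow> 'a set" where
  "gsphere V E v t = {w \<in> V. gdist E v w = t}"

definition graph_isometry :: "'a set \<Rightarrow> ('a \<Rightarrow> 'a \<Rightarrow> bool) \<Rightarrow> ('a \<Rightarrow> 'a) \<Rightarrow> bool" where
  "graph_isometry V E \<pi> \<longleftrightarrow>
     bij_betw \<pi> V V \<and> (\<forall>x\<in>V. \<forall>y\<in>V. gdist E (\<pi> x) (\<pi> y) = gdist E x y)"

lemma walk_len_0 [simp]: "walk_len E u v 0 \<longleftrightarrow> u = v"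
  unfolding walk_len_def by auto

lemma walk_len_Suc: "walk_len E u w (Suc k) \<longleftrightarrow> (\<exists>v. walk_len E u v k \<and> E v w)"
proof
  assume "walk_len E u w (Suc k)"
  then obtain p where "p 0 = u" "p (Suc k) = w" "\<forall>i<Suc k. E (p i) (p (Suc i))"
    unfolding walk_len_def by blast
  then show "\<exists>v. walk_len E u v k \<and> E v w"
    unfolding walk_len_def by (metis lessI less_SucI)
next
  assume "\<exists>v. walk_len E u v k \<and> E v w"
  then obtain p where p: "p 0 = u" "\<forall>i<k. E (p i) (p (Suc i))" "E (p k) w"
    unfolding walk_len_def by blast
  have "\<forall>i<Suc k. E ((p(Suc k := w)) i) ((p(Suc k := w)) (Suc i))"
    using p by (auto simp: less_Suc_eq)
  then show "walk_len E u w (Suc k)"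
    unfolding walk_len_def using p by (intro exI[of _ "p(Suc k := w)"]) simp
qed

lemma walk_len_1: "walk_len E u v (Suc 0) \<longleftrightarrow> E u v"
  by (simp add: walk_len_Suc)

lemma walk_len_trans: "walk_len E u v k \<Longrightarrow> walk_len E v w m \<Longrightarrow> walk_len E u w (k + m)"
  by (induction m arbitrary: w) (auto simp: walk_len_Suc)

lemma walk_len_sym:
  assumes "\<And>x y. E x y \<Longrightarrow> E y x"
  shows "walk_len E u v k \<Longrightarrow> walk_len E v u k"
proof (induction k arbitrary: v)
  case (Suc k)
  then obtain y where "walk_len E u y k" "E y v" by (auto simp: walk_len_Suc)
  then have "walk_len E v y (Suc 0)" "walk_len E y u k"
    using Suc.IH assms by (auto simp only: walk_len_1)
  then show ?case using walk_len_trans by fastforce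
qed simp

lemma walk_len_lower_bound:
  assumes "\<And>y z. E y z \<Longrightarrow> d z \<le> d y + 1"
  shows "walk_len E u v k \<Longrightarrow> d v \<le> d u + k"
proof (induction k arbitrary: v)
  case (Suc k)
  then obtain y where "walk_len E u y k" "E y v" by (auto simp: walk_len_Suc)
  then show ?case using Suc.IH assms by fastforce
qed simp

lemma gdist_eqI: "walk_len E u v k \<Longrightarrow> (\<And>m. walk_len E u v m \<Longrightarrow> k \<le> m) \<Longrightarrow> gdist E u v = k"
  unfolding gdist_def by (rule Least_equality)

lemma gdist_self [simp]: "gdist E u u = 0"
  by (rule gdist_eqI) auto

lemma walk_len_gdist: "walk_len E u v k \<Longrightarrow> walk_len E u v (gdist E u v)"
  unfolding gdist_def by (rule LeastI)

lemma gdist_eq_0_iff: "walk_len E u v k \<Longrightarrow> gdist E u v = 0 \<longleftrightarrow> u = v"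
  using walk_len_gdist by fastforce

lemma gdist_le_diam: "finite V \<Longrightarrow> u \<in> V \<Longrightarrow> v \<in> V \<Longrightarrow> gdist E u v \<le> diam V E"
  unfolding diam_def by (rule Max_ge) (auto simp: finite_image_set2)

lemma vstring_eq_iff:
  "vstring V E f v = vstring V E g w \<longleftrightarrow>
     (\<forall>t\<in>{1..diam V E}. sum f (gsphere V E v t) = sum g (gsphere V E w t))"
  by (simp add: vstring_def gsphere_def atLeastLessThanSuc_atLeastAtMost del: upt_Suc)

lemma vstring_cong: "(\<And>x. x \<in> V \<Longrightarrow> f x = g x) \<Longrightarrow> vstring V E f v = vstring V E g v"
  unfolding vstring_def by (intro map_cong refl sum.cong) auto

lemma sum_gspheres:
  fixes f :: "'a \<Rightarrow> real"
  assumes "finite V" "v \<in> V" "\<And>w. w \<in> V \<Longrightarrow> \<exists>k. walk_len E v w k"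
  shows "(\<Sum>t=1..diam V E. sum f (gsphere V E v t)) = sum f V - f v"
proof -
  have "gdist E v w \<in> {1..diam V E}" if "w \<in> V" "w \<noteq> v" for w
    using that assms(3)[OF that(1)] gdist_eq_0_iff gdist_le_diam[OF assms(1,2) that(1)]
    by fastforce
  then have dist_range: "gdist E v ` (V - {v}) \<subseteq> {1..diam V E}" by blast
  have "gsphere V E v t = {w \<in> V - {v}. gdist E v w = t}" if "1 \<le> t" for t
    using that by (auto simp: gsphere_def)
  then have "(\<Sum>t=1..diam V E. sum f (gsphere V E v t))
      = (\<Sum>t=1..diam V E. sum f {w \<in> V - {v}. gdist E v w = t})"
    by simp
  also have "\<dots> = sum f (V - {v})"
    using assms(1) dist_range by (intro sum.group) auto
  also have "\<dots> = sum f V - f v"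
    using assms(1,2) by (simp add: sum_diff1)
  finally show ?thesis .
qed

lemma vstring_eq_imp_rank_eq:
  assumes "finite V" "\<And>u w. u \<in> V \<Longrightarrow> w \<in> V \<Longrightarrow> \<exists>k. walk_len E u w k"
    and "v \<in> V" "w \<in> V" "vstring V E f v = vstring V E f w"
  shows "f v = f w"
proof -
  have "(\<Sum>t=1..diam V E. sum f (gsphere V E v t)) = (\<Sum>t=1..diam V E. sum f (gsphere V E w t))"
    using assms(5) by (intro sum.cong[OF refl]) (auto simp: vstring_eq_iff)
  then show ?thesis
    using sum_gspheres[OF assms(1,3)] sum_gspheres[OF assms(1,4)] assms(2-4) by simp
qed

lemma vstring_eq_imp_gdist_image_eq:
  fixes f :: "'a \<Rightarrow> real"
  assumes "finite V" "\<And>x. x \<in> V \<Longrightarrow> 0 < f x"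
    and "v \<in> V" "w \<in> V" "vstring V E f v = vstring V E f w"
  shows "gdist E v ` V = gdist E w ` V"
proof -
  have "gsphere V E v t \<noteq> {} \<longleftrightarrow> gsphere V E w t \<noteq> {}" for t
  proof -
    have nonempty_iff_pos: "gsphere V E u t \<noteq> {} \<longleftrightarrow> 0 < sum f (gsphere V E u t)" for u
    proof -
      have "gsphere V E u t \<subseteq> V" by (auto simp: gsphere_def)
      then show ?thesis
        using assms(1,2) by (metis less_irrefl rev_finite_subset subsetD sum.empty sum_pos)
    qed
    consider "t = 0" | "diam V E < t" | "t \<in> {1..diam V E}"
      unfolding atLeastAtMost_iff by linarith
    then show ?thesis
    proof cases
      case 1
      then show ?thesis using assms(3,4) by (auto simp: gsphere_def)
    next
      case 2
      have "gsphere V E u t = {}" if "u \<in> V" for u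
        using 2 gdist_le_diam[OF assms(1) that, of _ E] unfolding gsphere_def
        by (metis (mono_tags, lifting) empty_Collect_eq not_le)
      then show ?thesis using assms(3,4) by simp
    next
      case 3
      then show ?thesis using assms(5) nonempty_iff_pos by (simp add: vstring_eq_iff)
    qed
  qed
  moreover have "t \<in> gdist E u ` V \<longleftrightarrow> gsphere V E u t \<noteq> {}" for u t
    by (auto simp: gsphere_def)
  ultimately show ?thesis by blast
qed

lemma sum_less_2_iff_card_le_1:
  fixes f :: "'a \<Rightarrow> real"
  assumes "finite A" "\<And>x. x \<in> A \<Longrightarrow> 1 \<le> f x \<and> f x < 2"
  shows "sum f A < 2 \<longleftrightarrow> card A \<le> 1"
proof
  assume "sum f A < 2"
  moreover have "real (card A) \<le> sum f A"
    using sum_mono[of A "\<lambda>_. 1" f] assms(2) by simp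
  ultimately show "card A \<le> 1" by linarith
next
  assume "card A \<le> 1"
  then consider "A = {}" | a where "A = {a}"
    using assms(1) by (metis One_nat_def card_1_singletonE card_0_eq le_Suc_eq le_zero_eq)
  then show "sum f A < 2" by cases (use assms(2) in auto)
qed

lemma vstring_eq_imp_card_neighbours_le_1_iff:
  fixes f :: "'a \<Rightarrow> real"
  assumes "finite V" "\<And>x. x \<in> V \<Longrightarrow> 1 \<le> f x \<and> f x < 2" "1 \<le> diam V E"
    and "vstring V E f v = vstring V E f w"
  shows "card (gsphere V E v 1) \<le> 1 \<longleftrightarrow> card (gsphere V E w 1) \<le> 1"
proof -
  have "card (gsphere V E u 1) \<le> 1 \<longleftrightarrow> sum f (gsphere V E u 1) < 2" for u
    using assms(1,2) by (intro sum_less_2_iff_card_le_1[symmetric]) (auto simp: gsphere_def)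
  then show ?thesis using assms(3,4) by (simp add: vstring_eq_iff)
qed

lemma vstring_isometry:
  assumes "graph_isometry V E \<pi>" "v \<in> V"
  shows "vstring V E f (\<pi> v) = vstring V E (f \<circ> \<pi>) v"
proof -
  have bij: "bij_betw \<pi> V V"
    and dist: "\<And>x y. x \<in> V \<Longrightarrow> y \<in> V \<Longrightarrow> gdist E (\<pi> x) (\<pi> y) = gdist E x y"
    using assms(1) by (auto simp: graph_isometry_def)
  have "gsphere V E (\<pi> v) t = \<pi> ` gsphere V E v t" for t
  proof
    show "\<pi> ` gsphere V E v t \<subseteq> gsphere V E (\<pi> v) t"
      using bij dist assms(2) by (auto simp: gsphere_def bij_betw_def)
    show "gsphere V E (\<pi> v) t \<subseteq> \<pi> ` gsphere V E v t"
    proof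
      fix u assume u: "u \<in> gsphere V E (\<pi> v) t"
      then obtain x where "x \<in> V" "u = \<pi> x"
        using bij by (auto simp: gsphere_def bij_betw_def)
      then show "u \<in> \<pi> ` gsphere V E v t"
        using u dist assms(2) by (auto simp: gsphere_def)
    qed
  qed
  moreover have "inj_on \<pi> (gsphere V E v t)" for t
    using bij by (auto simp: gsphere_def bij_betw_def intro: inj_on_subset)
  ultimately show ?thesis
    by (simp add: vstring_def sum.reindex flip: gsphere_def)
qed

lemma inj_vstring_isometry_fixes:
  assumes "inj_on (vstring V E f) V" "graph_isometry V E \<pi>"
    and "\<And>x. x \<in> V \<Longrightarrow> f (\<pi> x) = f x" "v \<in> V"
  shows "\<pi> v = v"
proof -
  have "vstring V E f (\<pi> v) = vstring V E f v"
    using vstring_isometry[OF assms(2,4)] assms(3) vstring_cong[of V "f \<circ> \<pi>" f] by simp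
  moreover have "\<pi> v \<in> V"
    using assms(2,4) by (auto simp: graph_isometry_def bij_betw_def)
  ultimately show ?thesis using assms(1,4) by (auto dest: inj_onD)
qed

lemma inj_vstring_two_le_card:
  assumes "finite V" "inj_on (vstring V E f) V"
    and "graph_isometry V E \<pi>" "v \<in> V" "\<pi> v \<noteq> v"
  shows "2 \<le> card (f ` V)"
proof (rule ccontr)
  assume "\<not> 2 \<le> card (f ` V)"
  then have "card (f ` V) \<le> Suc 0" by simp
  moreover have "finite (f ` V)" using assms(1) by simp
  ultimately have const: "\<forall>a\<in>f ` V. \<forall>b\<in>f ` V. a = b"
    by (simp only: card_le_Suc0_iff_eq)
  have "f (\<pi> x) = f x" if "x \<in> V" for x
  proof -
    have "\<pi> x \<in> V"
      using that assms(3) bij_betw_apply unfolding graph_isometry_def by fast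
    then show ?thesis using that const by blast
  qed
  then show False using inj_vstring_isometry_fixes[OF assms(2,3)] assms(4,5) by blast
qed

lemma vstring_isometry_eq_imp_sum_diff_eq_0:
  assumes "graph_isometry V E \<pi>" "v \<in> V" "vstring V E f (\<pi> v) = vstring V E f v"
    and "t \<in> {1..diam V E}"
  shows "(\<Sum>u\<in>gsphere V E v t. f (\<pi> u) - f u) = 0"
proof -
  have "vstring V E (f \<circ> \<pi>) v = vstring V E f v"
    using assms(3) vstring_isometry[OF assms(1,2)] by simp
  then have "sum (f \<circ> \<pi>) (gsphere V E v t) = sum f (gsphere V E v t)"
    using assms(4) unfolding vstring_eq_iff by blast
  then show ?thesis by (simp add: sum_subtractf)
qed

section \<open>Caterpillars\<close>

definition cat_dist :: "nat \<times> nat \<Rightarrow> nat \<times> nat \<Rightarrow> nat" where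
  "cat_dist x y = (if x = y then 0 else
     (if fst x \<le> fst y then fst y - fst x else fst x - fst y)
     + (if snd x = 0 then 0 else 1) + (if snd y = 0 then 0 else 1))"

definition rank_level :: "nat \<times> nat \<Rightarrow> nat" where
  "rank_level x = (if snd x \<noteq> 0 then snd x else if fst x = 1 then 2 else 1)"

definition cat_rank :: "nat \<times> nat \<Rightarrow> real" where
  "cat_rank x = 2 - 1 / real (rank_level x)"

lemma rank_level_pos: "1 \<le> rank_level x"
  by (simp add: rank_level_def)

lemma cat_rank_bounds: "1 \<le> cat_rank x \<and> cat_rank x < 2"
  using rank_level_pos[of x] by (simp add: cat_rank_def)

lemma cat_rank_eq_iff: "cat_rank x = cat_rank y \<longleftrightarrow> rank_level x = rank_level y"
  using rank_level_pos[of x] rank_level_pos[of y] by (simp add: cat_rank_def)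

locale caterpillar =
  fixes n :: nat and L :: "nat \<Rightarrow> nat"
  assumes spine_nonempty: "1 \<le> n" and first_leaf: "1 \<le> L 1" and last_leaf: "1 \<le> L n"
begin

abbreviation V :: "(nat \<times> nat) set" where "V \<equiv> cat_V n L"
abbreviation E :: "nat \<times> nat \<Rightarrow> nat \<times> nat \<Rightarrow> bool" where "E \<equiv> cat_E n L"

lemma finite_V: "finite V"
proof -
  have "V = Sigma {1..n} (\<lambda>i. {..L i})" by (auto simp: cat_V_def)
  then show ?thesis by simp
qed

lemma walk_len_cat_sym: "walk_len E u v k \<Longrightarrow> walk_len E v u k"
  by (rule walk_len_sym) (auto simp: cat_E_def)

lemma walk_spine_up: "1 \<le> i \<Longrightarrow> i + m \<le> n \<Longrightarrow> walk_len E (i, 0) (i + m, 0) m"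
proof (induction m)
  case (Suc m)
  then have "E (i + m, 0) (i + Suc m, 0)" by (auto simp: cat_E_def cat_V_def)
  then show ?case using Suc by (auto simp: walk_len_Suc)
qed simp

lemma walk_spine:
  assumes "(i, 0) \<in> V" "(j, 0) \<in> V"
  shows "walk_len E (i, 0) (j, 0) (if i \<le> j then j - i else i - j)"
proof (cases "i \<le> j")
  case True
  then show ?thesis using walk_spine_up[of i "j - i"] assms by (simp add: cat_V_def)
next
  case False
  then have "walk_len E (j, 0) (i, 0) (i - j)"
    using walk_spine_up[of j "i - j"] assms by (simp add: cat_V_def)
  then show ?thesis using False walk_len_cat_sym by simp
qed

lemma walk_to_spine: "(i, a) \<in> V \<Longrightarrow> walk_len E (i, a) (i, 0) (if a = 0 then 0 else 1)"
  by (auto simp: walk_len_1 cat_E_def cat_V_def)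

lemma walk_cat_dist:
  assumes "x \<in> V" "y \<in> V"
  shows "walk_len E x y (cat_dist x y)"
proof (cases "x = y")
  case False
  obtain i a j b where xy: "x = (i, a)" "y = (j, b)" by fastforce
  have "(i, 0) \<in> V" "(j, 0) \<in> V" using assms xy by (auto simp: cat_V_def)
  then have "walk_len E (i, 0) (j, 0) (if i \<le> j then j - i else i - j)"
    by (rule walk_spine)
  moreover have "walk_len E x (i, 0) (if a = 0 then 0 else 1)"
    using walk_to_spine assms(1) xy by simp
  moreover have "walk_len E (j, 0) y (if b = 0 then 0 else 1)"
    using walk_to_spine assms(2) xy walk_len_cat_sym by simp
  moreover have "cat_dist x y
      = (if a = 0 then 0 else 1) + (if i \<le> j then j - i else i - j) + (if b = 0 then 0 else 1)"
    using False xy by (simp add: cat_dist_def)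
  ultimately show ?thesis by (metis walk_len_trans)
qed (simp add: cat_dist_def)

lemma cat_dist_edge: "E y z \<Longrightarrow> cat_dist x z \<le> cat_dist x y + 1"
  by (cases x; cases y; cases z) (auto simp: cat_dist_def cat_E_def split: if_splits)

lemma gdist_cat: "x \<in> V \<Longrightarrow> y \<in> V \<Longrightarrow> gdist E x y = cat_dist x y"
  using walk_cat_dist walk_len_lower_bound[of E "cat_dist x" x y, OF cat_dist_edge]
  by (intro gdist_eqI) (auto simp: cat_dist_def)

lemma connected: "x \<in> V \<Longrightarrow> y \<in> V \<Longrightarrow> \<exists>k. walk_len E x y k"
  using walk_cat_dist by blast

lemma gsphere_cat: "v \<in> V \<Longrightarrow> gsphere V E v t = {w \<in> V. cat_dist v w = t}"
  by (auto simp: gsphere_def gdist_cat)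

lemma cat_dist_le_diam: "x \<in> V \<Longrightarrow> y \<in> V \<Longrightarrow> cat_dist x y \<le> diam V E"
  by (metis gdist_cat gdist_le_diam[OF finite_V])

lemma graph_isometry_catI:
  assumes "\<And>x. x \<in> V \<Longrightarrow> \<pi> x \<in> V" "\<And>x. x \<in> V \<Longrightarrow> \<pi> (\<pi> x) = x"
    and "\<And>x y. x \<in> V \<Longrightarrow> y \<in> V \<Longrightarrow> cat_dist (\<pi> x) (\<pi> y) = cat_dist x y"
  shows "graph_isometry V E \<pi>"
  unfolding graph_isometry_def using assms
  by (auto simp: gdist_cat intro!: bij_betw_byWitness[where f' = \<pi>])

lemma cat_dist_cong:
  assumes "fst x' = fst x" "fst y' = fst y" "snd x' = 0 \<longleftrightarrow> snd x = 0" "snd y' = 0 \<longleftrightarrow> snd y = 0"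
    and "x' = y' \<longleftrightarrow> x = y"
  shows "cat_dist x' y' = cat_dist x y"
  using assms by (simp add: cat_dist_def)

lemma graph_isometry_transpose_leaves:
  assumes "p \<in> V" "q \<in> V" "fst p = fst q" "snd p \<noteq> 0" "snd q \<noteq> 0"
  shows "graph_isometry V E (transpose p q)"
proof (rule graph_isometry_catI)
  have "fst (transpose p q z) = fst z \<and> (snd (transpose p q z) = 0 \<longleftrightarrow> snd z = 0)" for z
    using assms(3-5) by (simp add: transpose_def)
  then show "cat_dist (transpose p q x) (transpose p q y) = cat_dist x y" for x y
    by (intro cat_dist_cong) (auto dest: transpose_eq_imp_eq)
  show "transpose p q x \<in> V" if "x \<in> V" for x
    using assms(1,2) that by (simp add: transpose_def)
qed simp

lemma inj_vstring_leaf_ranks_distinct: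
  assumes "inj_on (vstring V E f) V" "p \<in> V" "q \<in> V" "p \<noteq> q"
    and "fst p = fst q" "snd p \<noteq> 0" "snd q \<noteq> 0"
  shows "f p \<noteq> f q"
proof
  assume "f p = f q"
  then have "f (transpose p q x) = f x" for x
    by (simp add: transpose_def)
  moreover have "graph_isometry V E (transpose p q)"
    using assms(2,3,5-7) by (rule graph_isometry_transpose_leaves)
  ultimately have "transpose p q p = p"
    by (intro inj_vstring_isometry_fixes[OF assms(1) _ _ assms(2)])
  then show False using assms(4) by simp
qed

lemma Max_leaves_attained:
  obtains i where "i \<in> {1..n}" "L i = Max (L ` {1..n})"
  using spine_nonempty Max_in[of "L ` {1..n}"] by fastforce

lemma max_leaves_le_card:
  assumes "inj_on (vstring V E f) V"
  shows "Max (L ` {1..n}) \<le> card (f ` V)"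
proof -
  obtain i where i: "i \<in> {1..n}" "L i = Max (L ` {1..n})" by (rule Max_leaves_attained)
  let ?leaves = "(\<lambda>j. (i, j)) ` {1..L i}"
  have leaves_V: "?leaves \<subseteq> V" using i by (auto simp: cat_V_def)
  have "inj_on f ?leaves"
  proof (rule inj_onI)
    fix x y assume "x \<in> ?leaves" "y \<in> ?leaves" "f x = f y"
    then show "x = y"
      using inj_vstring_leaf_ranks_distinct[OF assms, of x y] leaves_V by fastforce
  qed
  then have "card (f ` ?leaves) = card ?leaves" by (rule card_image)
  also have "\<dots> = L i" by (simp add: card_image inj_on_def)
  finally have "card (f ` ?leaves) = L i" .
  moreover have "card (f ` ?leaves) \<le> card (f ` V)"
    using leaves_V finite_V by (intro card_mono) auto
  ultimately show ?thesis using i by simp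
qed

lemma rank_level_image: "rank_level ` V = {1..max (Max (L ` {1..n})) 2}"
proof
  have L_le_Max: "L i \<le> Max (L ` {1..n})" if "i \<in> {1..n}" for i
    using that by simp
  show "rank_level ` V \<subseteq> {1..max (Max (L ` {1..n})) 2}"
  proof
    fix k assume "k \<in> rank_level ` V"
    then obtain i j where ij: "(i, j) \<in> V" "k = rank_level (i, j)" by auto
    then have "j \<le> L i" "L i \<le> Max (L ` {1..n})"
      by (auto simp: cat_V_def intro: L_le_Max)
    then show "k \<in> {1..max (Max (L ` {1..n})) 2}"
      using ij rank_level_pos[of "(i, j)"] by (auto simp: rank_level_def)
  qed
  obtain i where i: "i \<in> {1..n}" "L i = Max (L ` {1..n})" by (rule Max_leaves_attained)
  show "{1..max (Max (L ` {1..n})) 2} \<subseteq> rank_level ` V"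
  proof
    fix k assume k: "k \<in> {1..max (Max (L ` {1..n})) 2}"
    show "k \<in> rank_level ` V"
    proof (cases "k \<le> L i")
      case True
      then have "(i, k) \<in> V" "rank_level (i, k) = k"
        using i k by (auto simp: cat_V_def rank_level_def)
      then show ?thesis by (metis image_eqI)
    next
      case False
      have "L 1 \<le> Max (L ` {1..n})" by (rule L_le_Max) (use spine_nonempty in simp)
      then have "k = 2"
        using False k i(2) first_leaf by (simp add: max_def split: if_splits)
      then have "(1, 0) \<in> V" "rank_level (1, 0) = k"
        using spine_nonempty by (auto simp: cat_V_def rank_level_def)
      then show ?thesis by (metis image_eqI)
    qed
  qed
qed

lemma card_cat_rank: "card (cat_rank ` V) = max (Max (L ` {1..n})) 2"
proof -
  have "cat_rank ` V = (\<lambda>k. 2 - 1 / real k) ` rank_level ` V"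
    by (auto simp: cat_rank_def image_image)
  moreover have "inj_on (\<lambda>k. 2 - 1 / real k) (rank_level ` V)"
    using rank_level_pos by (auto intro!: inj_onI)
  ultimately show ?thesis by (simp add: card_image rank_level_image)
qed

lemma Max_cat_dist:
  assumes "2 \<le> n" "(i, a) \<in> V"
  shows "Max (cat_dist (i, a) ` V) = max (i - 1) (n - i) + (if a = 0 then 1 else 2)"
proof (rule Max_eqI)
  show "finite (cat_dist (i, a) ` V)" using finite_V by simp
  show "d \<le> max (i - 1) (n - i) + (if a = 0 then 1 else 2)"
    if "d \<in> cat_dist (i, a) ` V" for d using that assms by (auto simp: cat_dist_def cat_V_def split: if_splits)
  have "(1, 1) \<in> V" "(n, 1) \<in> V"
    using first_leaf last_leaf spine_nonempty by (auto simp: cat_V_def)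
  moreover have "cat_dist (i, a) (1, 1) = max (i - 1) (n - i) + (if a = 0 then 1 else 2)"
    if "n - i \<le> i - 1" using that assms by (auto simp: cat_dist_def cat_V_def)
  moreover have "cat_dist (i, a) (n, 1) = max (i - 1) (n - i) + (if a = 0 then 1 else 2)"
    if "\<not> n - i \<le> i - 1" using that assms by (auto simp: cat_dist_def cat_V_def)
  ultimately show "max (i - 1) (n - i) + (if a = 0 then 1 else 2) \<in> cat_dist (i, a) ` V"
    by (metis image_eqI)
qed

lemma neighbours_leaf: "(i, a) \<in> V \<Longrightarrow> a \<noteq> 0 \<Longrightarrow> {w \<in> V. cat_dist (i, a) w = 1} = {(i, 0)}"
  by (auto simp: cat_dist_def cat_V_def split: if_splits)

lemma two_le_card_neighbours_spine:
  assumes "(i, 0) \<in> V" "2 \<le> n \<or> 2 \<le> L 1"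
  shows "2 \<le> card {w \<in> V. cat_dist (i, 0) w = 1}"
proof -
  have i: "1 \<le> i" "i \<le> n" using assms(1) by (auto simp: cat_V_def)
  have "\<exists>p q. p \<noteq> q \<and> p \<in> V \<and> q \<in> V \<and> cat_dist (i, 0) p = 1 \<and> cat_dist (i, 0) q = 1"
  proof -
    consider "i = 1" "n = 1" | "i = 1" "2 \<le> n" | "i = n" "2 \<le> n" | "1 < i" "i < n"
      using i by linarith
    then show ?thesis
    proof cases
      case 1
      then show ?thesis using assms(2)
        by (intro exI[of _ "(1, 1)"] exI[of _ "(1, 2)"]) (auto simp: cat_dist_def cat_V_def)
    next
      case 2
      then show ?thesis using first_leaf
        by (intro exI[of _ "(1, 1)"] exI[of _ "(2, 0)"]) (auto simp: cat_dist_def cat_V_def)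
    next
      case 3
      then show ?thesis using last_leaf
        by (intro exI[of _ "(n, 1)"] exI[of _ "(n - 1, 0)"]) (auto simp: cat_dist_def cat_V_def)
    next
      case 4
      then show ?thesis
        by (intro exI[of _ "(i - 1, 0)"] exI[of _ "(i + 1, 0)"]) (auto simp: cat_dist_def cat_V_def)
    qed
  qed
  then obtain p q where "p \<noteq> q" "{p, q} \<subseteq> {w \<in> V. cat_dist (i, 0) w = 1}" by auto
  moreover have "card {p, q} \<le> card {w \<in> V. cat_dist (i, 0) w = 1}"
    using calculation(2) finite_V by (intro card_mono) auto
  ultimately show ?thesis by simp
qed

lemma vstring_cat_rank_eq_imp_snd_eq:
  assumes "v \<in> V" "w \<in> V" "vstring V E cat_rank v = vstring V E cat_rank w"
  shows "snd v = snd w"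
proof -
  have "cat_rank v = cat_rank w"
    using vstring_eq_imp_rank_eq[OF finite_V connected assms] .
  then have level: "rank_level v = rank_level w"
    by (simp add: cat_rank_eq_iff)
  show ?thesis
  proof (cases "2 \<le> n \<or> 2 \<le> L 1")
    case True
    have "(1, 0) \<in> V" "(1, 1) \<in> V" using spine_nonempty first_leaf by (auto simp: cat_V_def)
    then have "1 \<le> diam V E"
      using cat_dist_le_diam[of "(1, 0)" "(1, 1)"] by (simp add: cat_dist_def)
    have bounds: "1 \<le> cat_rank x \<and> cat_rank x < 2" if "x \<in> V" for x
      by (rule cat_rank_bounds)
    have "card (gsphere V E v 1) \<le> 1 \<longleftrightarrow> card (gsphere V E w 1) \<le> 1"
      using finite_V bounds \<open>1 \<le> diam V E\<close> assms(3)
      by (rule vstring_eq_imp_card_neighbours_le_1_iff)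
    moreover have "card (gsphere V E u 1) \<le> 1 \<longleftrightarrow> snd u \<noteq> 0" if "u \<in> V" for u
    proof (cases "snd u = 0")
      case True
      then have "(fst u, 0) \<in> V" using that by (cases u) simp
      then have "2 \<le> card (gsphere V E u 1)"
        using two_le_card_neighbours_spine[of "fst u"] \<open>2 \<le> n \<or> 2 \<le> L 1\<close> True that
        by (cases u) (simp add: gsphere_cat)
      then show ?thesis using True by simp
    next
      case False
      then show ?thesis
        using that neighbours_leaf[of "fst u" "snd u"] by (cases u) (simp add: gsphere_cat)
    qed
    ultimately have "snd v = 0 \<longleftrightarrow> snd w = 0" using assms(1,2) by blast
    then show ?thesis using level by (cases "snd v = 0") (auto simp: rank_level_def)
  next
    case False
    \<comment> \<open>\<open>K\<^sub>2\<close>: both vertices have one neighbour, but their ranks differ\<close>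
    then have "n = 1" "L 1 = 1" using spine_nonempty first_leaf by auto
    then have "V = {(1, 0), (1, 1)}" by (auto simp: cat_V_def)
    then have "v \<in> {(1, 0), (1, 1)}" "w \<in> {(1, 0), (1, 1)}" using assms(1,2) by simp_all
    then show ?thesis using level by (auto simp: rank_level_def)
  qed
qed

lemma vstring_cat_rank_eq_imp_mirror:
  assumes "v \<in> V" "w \<in> V" "vstring V E cat_rank v = vstring V E cat_rank w"
  shows "fst w = fst v \<or> fst w = n + 1 - fst v"
proof (cases "n = 1")
  case True
  then show ?thesis using assms(1,2) by (auto simp: cat_V_def)
next
  case False
  obtain i a k b where vw: "v = (i, a)" "w = (k, b)" by (cases v, cases w)
  have pos: "0 < cat_rank x" if "x \<in> V" for x
    using cat_rank_bounds[of x] by linarith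
  have "gdist E v ` V = gdist E w ` V"
    by (rule vstring_eq_imp_gdist_image_eq[OF finite_V pos assms])
  then have "Max (cat_dist v ` V) = Max (cat_dist w ` V)"
    using assms(1,2) by (simp add: gdist_cat cong: image_cong)
  moreover have "2 \<le> n" using False spine_nonempty by simp
  ultimately have "max (i - 1) (n - i) + (if a = 0 then 1 else 2)
      = max (k - 1) (n - k) + (if b = 0 then 1 else 2)"
    using Max_cat_dist assms(1,2) vw by simp
  moreover have "a = b" using vstring_cat_rank_eq_imp_snd_eq[OF assms] vw by simp
  ultimately have "max (i - 1) (n - i) = max (k - 1) (n - k)" by simp
  moreover have "1 \<le> i" "i \<le> n" "1 \<le> k" "k \<le> n" using assms(1,2) vw by (auto simp: cat_V_def)
  ultimately have "k = i \<or> k = n + 1 - i"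
    by (simp add: max_def split: if_split_asm) linarith+
  then show ?thesis using vw by simp
qed

end

section \<open>Symmetric caterpillars\<close>

locale symmetric_caterpillar_graph = caterpillar +
  assumes symmetric: "symmetric_caterpillar n L"
begin

definition reflect :: "nat \<times> nat \<Rightarrow> nat \<times> nat" where
  "reflect x = (n + 1 - fst x, snd x)"

lemma L_reflect:
  assumes "1 \<le> i" "i \<le> n"
  shows "L (n + 1 - i) = L i"
proof -
  consider "i \<le> n div 2" | "n + 1 - i \<le> n div 2" | "n + 1 - i = i" by linarith
  then show ?thesis
  proof cases
    case 1
    then show ?thesis using symmetric assms unfolding symmetric_caterpillar_def by auto
  next
    case 2
    then have "L (n + 1 - i) = L (n + 1 - (n + 1 - i))"
      using symmetric assms unfolding symmetric_caterpillar_def by auto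
    then show ?thesis using assms by simp
  qed simp
qed

lemma reflect_isometry: "graph_isometry V E reflect"
proof (rule graph_isometry_catI)
  show "reflect x \<in> V" if "x \<in> V" for x
    using that L_reflect by (cases x) (auto simp: reflect_def cat_V_def)
  show "reflect (reflect x) = x" if "x \<in> V" for x
    using that by (cases x) (auto simp: reflect_def cat_V_def)
  show "cat_dist (reflect x) (reflect y) = cat_dist x y" if "x \<in> V" "y \<in> V" for x y
    using that by (cases x; cases y) (auto simp: reflect_def cat_V_def cat_dist_def)
qed

lemma cat_rank_reflect_diff:
  assumes "2 \<le> n" "u \<in> V"
  shows "cat_rank (reflect u) - cat_rank u
    = (if u = (n, 0) then 1/2 else 0) - (if u = (1, 0) then 1/2 else 0)"
  using assms by (cases u) (auto simp: cat_rank_def rank_level_def reflect_def cat_V_def)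

lemma vstring_cat_rank_reflect_ne:
  assumes "2 \<le> n" "v \<in> V" "reflect v \<noteq> v"
  shows "vstring V E cat_rank (reflect v) \<noteq> vstring V E cat_rank v"
proof
  assume eq: "vstring V E cat_rank (reflect v) = vstring V E cat_rank v"
  have ends: "(1, 0) \<in> V" "(n, 0) \<in> V" using spine_nonempty by (auto simp: cat_V_def)
  have "cat_dist v (1, 0) \<noteq> cat_dist v (n, 0)"
    using assms(2,3) by (cases v) (auto simp: cat_dist_def reflect_def cat_V_def)
  define t where "t = max (cat_dist v (1, 0)) (cat_dist v (n, 0))"
  let ?S = "gsphere V E v t"
  have "t \<in> {1..diam V E}"
    using \<open>cat_dist v (1, 0) \<noteq> cat_dist v (n, 0)\<close> cat_dist_le_diam[OF assms(2) ends(1)]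
      cat_dist_le_diam[OF assms(2) ends(2)]
    unfolding t_def by auto
  then have "(\<Sum>u\<in>?S. cat_rank (reflect u) - cat_rank u) = 0"
    by (rule vstring_isometry_eq_imp_sum_diff_eq_0[OF reflect_isometry assms(2) eq])
  moreover have "(\<Sum>u\<in>?S. cat_rank (reflect u) - cat_rank u)
      = (\<Sum>u\<in>?S. (if u = (n, 0) then 1/2 else 0) - (if u = (1, 0) then 1/2 else 0))"
    using cat_rank_reflect_diff[OF assms(1)] by (intro sum.cong) (auto simp: gsphere_def)
  moreover have "finite ?S" using finite_V by (simp add: gsphere_def)
  moreover have "(n, 0) \<in> ?S \<longleftrightarrow> (1, 0) \<notin> ?S"
    using \<open>cat_dist v (1, 0) \<noteq> cat_dist v (n, 0)\<close> ends
    by (auto simp: gsphere_cat[OF assms(2)] t_def max_def)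
  ultimately show False by (auto simp: sum_subtractf sum.delta split: if_splits)
qed

lemma inj_vstring_cat_rank: "inj_on (vstring V E cat_rank) V"
proof (rule inj_onI)
  fix v w assume v: "v \<in> V" and w: "w \<in> V"
    and eq: "vstring V E cat_rank v = vstring V E cat_rank w"
  have "snd w = snd v" using vstring_cat_rank_eq_imp_snd_eq[OF v w eq] by simp
  show "v = w"
  proof (rule ccontr)
    assume "v \<noteq> w"
    then have "fst w = n + 1 - fst v" "fst w \<noteq> fst v"
      using vstring_cat_rank_eq_imp_mirror[OF v w eq] \<open>snd w = snd v\<close> prod_eq_iff by metis+
    then have "w = reflect v" "reflect v \<noteq> v" "2 \<le> n"
      using \<open>snd w = snd v\<close> v w by (auto simp: reflect_def cat_V_def prod_eq_iff)
    then show False using vstring_cat_rank_reflect_ne[OF _ v] eq by metis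
  qed
qed

lemma exists_isometry_moving_vertex: "\<exists>\<pi> v. graph_isometry V E \<pi> \<and> v \<in> V \<and> \<pi> v \<noteq> v"
proof -
  consider "2 \<le> n" | "n = 1" "2 \<le> L 1" | "n = 1" "L 1 = 1"
    using spine_nonempty first_leaf by linarith
  then show ?thesis
  proof cases
    case 1
    then have "(1, 0) \<in> V" "reflect (1, 0) \<noteq> (1, 0)" by (auto simp: cat_V_def reflect_def)
    then show ?thesis using reflect_isometry by blast
  next
    case 2
    then have "(1, 1) \<in> V" "(1, 2) \<in> V" by (auto simp: cat_V_def)
    then show ?thesis using graph_isometry_transpose_leaves[of "(1, 1)" "(1, 2)"]
      by (intro exI[of _ "transpose (1, 1) (1, 2)"] exI[of _ "(1, 1)"]) simp
  next
    case 3
    then have V: "V = {(1, 0), (1, 1)}" by (auto simp: cat_V_def)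
    have "graph_isometry V E (transpose (1, 0) (1, 1))"
      by (rule graph_isometry_catI) (auto simp: V cat_dist_def)
    then show ?thesis by (intro exI[of _ "transpose (1, 0) (1, 1)"] exI[of _ "(1, 0)"]) (simp add: V)
  qed
qed

lemma two_le_card: "inj_on (vstring V E f) V \<Longrightarrow> 2 \<le> card (f ` V)"
  using exists_isometry_moving_vertex inj_vstring_two_le_card[OF finite_V] by blast

end

theorem mainTheorem15:
  fixes n :: nat and L :: "nat \<Rightarrow> nat"
  assumes "n \<ge> 1" and "L 1 \<ge> 1" and "L n \<ge> 1"
    and "symmetric_caterpillar n L"
  shows "IDI (cat_V n L) (cat_E n L) =
           (let M = Max (L ` {1..n}) in if M \<ge> 2 then M else 2)"
proof -
  interpret symmetric_caterpillar_graph n L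
    using assms by unfold_locales
  have "IDI V E = max (Max (L ` {1..n})) 2"
    unfolding IDI_def
  proof (rule Least_equality)
    show "\<exists>f. card (f ` V) = max (Max (L ` {1..n})) 2 \<and> inj_on (vstring V E f) V"
      using card_cat_rank inj_vstring_cat_rank by blast
    show "max (Max (L ` {1..n})) 2 \<le> k"
      if "\<exists>f. card (f ` V) = k \<and> inj_on (vstring V E f) V" for k
      using that max_leaves_le_card two_le_card by fastforce
  qed
  then show ?thesis by (simp add: Let_def max_def)
qed

end
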